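(* Let $\mu=g\,dx$ be a finite Borel measure on $\mathbb{R}^d$ absolutely continuous with respect to Lebesgue measure, with density $g\ge0$. If $\mu$ admits a tight frame measure (in particular a Plancherel measure), then $g$ is a constant multiple of the characteristic function of a set (its support) Lebesgue-a.e. Consequently, if $g$ is not a constant multiple of a characteristic function, then $\mu$ admits no tight frame of weighted exponentials $\{w_\lambda e_\lambda:\lambda\in\Lambda\}$ ($w_\lambda\in\mathbb{C}$) for $L^2(\mu)$, and in particular no orthonormal basis of exponentials. *)

theory Defs
  imports "HOL-Analysis.Analysis"
begin

text \<open>Setting: mu = g dx on a Euclidean space 'a (playing the role of R^d).
  Exponentials e_t(x) = exp(2 pi i t.x).\<close>

definition exp_fun :: "'a::euclidean_space \<Rightarrow> 'a \<Rightarrow> complex" where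
  "exp_fun t x = exp (2 * complex_of_real pi * \<i> * complex_of_real (t \<bullet> x))"

definition in_L2 :: "('a::euclidean_space \<Rightarrow> real) \<Rightarrow> ('a \<Rightarrow> complex) \<Rightarrow> bool" where
  "in_L2 g f \<longleftrightarrow> f \<in> borel_measurable borel \<and>
     integrable lborel (\<lambda>x. g x * (cmod (f x))\<^sup>2)"

definition L2_norm_sq :: "('a::euclidean_space \<Rightarrow> real) \<Rightarrow> ('a \<Rightarrow> complex) \<Rightarrow> real" where
  "L2_norm_sq g f = (\<integral>x. g x * (cmod (f x))\<^sup>2 \<partial>lborel)"

definition inner_exp :: "('a::euclidean_space \<Rightarrow> real) \<Rightarrow> ('a \<Rightarrow> complex) \<Rightarrow> 'a \<Rightarrow> complex" where
  "inner_exp g f t = (\<integral>x. complex_of_real (g x) * f x * cnj (exp_fun t x) \<partial>lborel)"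

definition tight_frame_measure :: "('a::euclidean_space \<Rightarrow> real) \<Rightarrow> 'a measure \<Rightarrow> bool" where
  "tight_frame_measure g \<nu> \<longleftrightarrow> sets \<nu> = sets borel \<and>
     (\<exists>A>0. \<forall>f. in_L2 g f \<longrightarrow>
        (\<integral>\<^sup>+ t. ennreal ((cmod (inner_exp g f t))\<^sup>2) \<partial>\<nu>) = ennreal (A * L2_norm_sq g f))"

definition tight_weighted_exp_frame ::
  "('a::euclidean_space \<Rightarrow> real) \<Rightarrow> 'a set \<Rightarrow> ('a \<Rightarrow> complex) \<Rightarrow> bool" where
  "tight_weighted_exp_frame g \<Lambda> w \<longleftrightarrow>
     (\<exists>A>0. \<forall>f. in_L2 g f \<longrightarrow>
        ((\<lambda>l. (cmod (inner_exp g f l * cnj (w l)))\<^sup>2) has_sum (A * L2_norm_sq g f)) \<Lambda>)"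

definition exp_ONB :: "('a::euclidean_space \<Rightarrow> real) \<Rightarrow> 'a set \<Rightarrow> bool" where
  "exp_ONB g \<Lambda> \<longleftrightarrow>
     (\<forall>l\<in>\<Lambda>. \<forall>l'\<in>\<Lambda>. inner_exp g (exp_fun l) l' = (if l = l' then 1 else 0)) \<and>
     (\<forall>f. in_L2 g f \<longrightarrow> (\<forall>l\<in>\<Lambda>. inner_exp g f l = 0) \<longrightarrow> L2_norm_sq g f = 0)"

end

theory Submission
  imports Defs
begin

text \<open>
  Each of these objects makes \<open>g\<close> \<^emph>\<open>phase invariant\<close>: the norm of \<open>f \<in> L\<^sup>2(\<mu>)\<close> is determined
  by the moduli \<open>|\<langle>f, e\<^sub>t\<rangle>|\<close>.  For an orthonormal basis this needs Parseval's identity, which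
  we derive from Bessel's inequality and the completeness (Riesz--Fischer) of \<open>L\<^sup>2(g dx)\<close>.
  Translating \<open>1\<^sub>B g\<close> by \<open>a\<close> only multiplies its Fourier transform by a unimodular factor, so
  phase invariance yields \<open>\<integral>\<^sub>B g = \<integral>\<^sub>B g\<^sup>2 / g(\<cdot> + a)\<close> for suitable sets \<open>B\<close>; hence \<open>g = g(\<cdot> + a)\<close>
  a.e. where both are positive, for every \<open>a\<close>.  By Tonelli this forces \<open>g\<close> to be constant on
  its support.
\<close>

section \<open>Exponentials and translations\<close>

lemma exp_fun_add: "exp_fun t (x + y) = exp_fun t x * exp_fun t y"
  unfolding exp_fun_def by (simp add: inner_add_right distrib_left exp_add[symmetric])

lemma cmod_exp_fun [simp]: "cmod (exp_fun t x) = 1"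
  unfolding exp_fun_def by (simp add: norm_exp_eq_Re)

lemma exp_fun_measurable [measurable]: "exp_fun t \<in> borel_measurable borel"
  unfolding exp_fun_def by (intro borel_measurable_continuous_onI continuous_intros)

lemma borel_measurable_cnj [measurable]:
  "f \<in> borel_measurable M \<Longrightarrow> (\<lambda>x. cnj (f x)) \<in> borel_measurable M"
  by (rule measurable_compose[where g = cnj])
    (auto intro: borel_measurable_continuous_onI continuous_intros)

lemma lborel_distr_translate:
  "distr lborel borel (\<lambda>x. x - a) = (lborel :: 'a::euclidean_space measure)"
proof -
  have "(\<lambda>x. x - a) = (+) (- a)" by (auto simp: fun_eq_iff)
  then show ?thesis by (simp add: lborel_distr_plus)
qed

lemma integral_translate:
  fixes F :: "'a::euclidean_space \<Rightarrow> 'b::{banach, second_countable_topology}"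
  assumes "F \<in> borel_measurable borel"
  shows "(\<integral>x. F (x - a) \<partial>lborel) = integral\<^sup>L lborel F"
proof -
  have "integral\<^sup>L (distr lborel borel (\<lambda>x. x - a)) F = (\<integral>x. F (x - a) \<partial>lborel)"
    by (rule integral_distr) (use assms in auto)
  then show ?thesis by (simp only: lborel_distr_translate)
qed

lemma integrable_translate:
  fixes F :: "'a::euclidean_space \<Rightarrow> 'b::{banach, second_countable_topology}"
  assumes "F \<in> borel_measurable borel"
  shows "integrable lborel (\<lambda>x. F (x - a)) \<longleftrightarrow> integrable lborel F"
proof -
  have "integrable (distr lborel borel (\<lambda>x. x - a)) F \<longleftrightarrow> integrable lborel (\<lambda>x. F (x - a))"
    by (rule integrable_distr_eq) (use assms in auto)
  then show ?thesis by (simp only: lborel_distr_translate)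
qed

lemma nn_integral_translate:
  fixes F :: "'a::euclidean_space \<Rightarrow> ennreal"
  assumes "F \<in> borel_measurable borel"
  shows "(\<integral>\<^sup>+ x. F (x - a) \<partial>lborel) = integral\<^sup>N lborel F"
proof -
  have "integral\<^sup>N (distr lborel borel (\<lambda>x. x - a)) F = (\<integral>\<^sup>+ x. F (x - a) \<partial>lborel)"
    by (rule nn_integral_distr) (use assms in auto)
  then show ?thesis by (simp only: lborel_distr_translate)
qed

text \<open>Translating the measure \<open>f \<mu>\<close> by \<open>a\<close> multiplies its Fourier coefficients by the
  unimodular factor \<open>e_t(-a)\<close>.  Here \<open>h\<close> is a density of the translate with respect to \<open>\<mu>\<close>.\<close>

lemma inner_exp_translate:
  assumes [measurable]: "f \<in> borel_measurable borel" "g \<in> borel_measurable borel"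
    and h: "\<And>x. complex_of_real (g x) * h x = complex_of_real (g (x - a)) * f (x - a)"
  shows "inner_exp g h t = cnj (exp_fun t a) * inner_exp g f t"
proof -
  have meas: "(\<lambda>x. complex_of_real (g x) * f x * cnj (exp_fun t (x + a))) \<in> borel_measurable borel"
    unfolding exp_fun_add by measurable
  have "inner_exp g h t = (\<integral>x. complex_of_real (g (x - a)) * f (x - a) * cnj (exp_fun t x) \<partial>lborel)"
    unfolding inner_exp_def h ..
  also have "\<dots> = (\<integral>x. complex_of_real (g x) * f x * cnj (exp_fun t (x + a)) \<partial>lborel)"
    using integral_translate[OF meas, of a] by simp
  also have "\<dots> = (\<integral>x. cnj (exp_fun t a) * (complex_of_real (g x) * f x * cnj (exp_fun t x)) \<partial>lborel)"
    by (simp only: exp_fun_add complex_cnj_mult mult_ac)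
  also have "\<dots> = cnj (exp_fun t a) * inner_exp g f t"
    unfolding inner_exp_def by (rule integral_mult_right_zero)
  finally show ?thesis .
qed

section \<open>Phase retrieval forces a constant density\<close>

text \<open>Every tight frame (measure) of
  exponentials makes \<open>g\<close> phase invariant, and this is all the argument uses.\<close>

definition phase_invariant :: "('a::euclidean_space \<Rightarrow> real) \<Rightarrow> bool" where
  "phase_invariant g \<longleftrightarrow> (\<forall>f h. in_L2 g f \<longrightarrow> in_L2 g h \<longrightarrow>
     (\<forall>t. cmod (inner_exp g f t) = cmod (inner_exp g h t)) \<longrightarrow> L2_norm_sq g f = L2_norm_sq g h)"

lemma L2_norm_sq_nonneg: "(\<And>x. g x \<ge> 0) \<Longrightarrow> L2_norm_sq g f \<ge> 0"
  unfolding L2_norm_sq_def by (intro integral_nonneg_AE) auto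

lemma tight_frame_measure_phase_invariant:
  assumes "\<And>x. g x \<ge> 0" and "tight_frame_measure g \<nu>"
  shows "phase_invariant g"
  unfolding phase_invariant_def
proof (intro allI impI)
  fix f h assume f: "in_L2 g f" and h: "in_L2 g h"
    and coeff: "\<forall>t. cmod (inner_exp g f t) = cmod (inner_exp g h t)"
  from assms(2) obtain A where "A > 0" and frame: "\<And>f. in_L2 g f \<Longrightarrow>
      (\<integral>\<^sup>+ t. ennreal ((cmod (inner_exp g f t))\<^sup>2) \<partial>\<nu>) = ennreal (A * L2_norm_sq g f)"
    unfolding tight_frame_measure_def by blast
  have "ennreal (A * L2_norm_sq g f) = ennreal (A * L2_norm_sq g h)"
    using frame[OF f] frame[OF h] coeff by simp
  then show "L2_norm_sq g f = L2_norm_sq g h"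
    using \<open>A > 0\<close> L2_norm_sq_nonneg[of g f, OF assms(1)] L2_norm_sq_nonneg[of g h, OF assms(1)]
    by (simp add: ennreal_inj)
qed

lemma tight_weighted_exp_frame_phase_invariant:
  assumes "tight_weighted_exp_frame g \<Lambda> w"
  shows "phase_invariant g"
  unfolding phase_invariant_def
proof (intro allI impI)
  fix f h assume f: "in_L2 g f" and h: "in_L2 g h"
    and coeff: "\<forall>t. cmod (inner_exp g f t) = cmod (inner_exp g h t)"
  from assms obtain A where "A > 0" and frame: "\<And>f. in_L2 g f \<Longrightarrow>
      ((\<lambda>l. (cmod (inner_exp g f l * cnj (w l)))\<^sup>2) has_sum (A * L2_norm_sq g f)) \<Lambda>"
    unfolding tight_weighted_exp_frame_def by blast
  have "(\<lambda>l. (cmod (inner_exp g f l * cnj (w l)))\<^sup>2) = (\<lambda>l. (cmod (inner_exp g h l * cnj (w l)))\<^sup>2)"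
    using coeff by (simp add: norm_mult)
  then have "A * L2_norm_sq g f = A * L2_norm_sq g h"
    using frame[OF f] frame[OF h] has_sum_unique by metis
  then show "L2_norm_sq g f = L2_norm_sq g h" using \<open>A > 0\<close> by simp
qed

lemma phase_invariant_translate:
  assumes "phase_invariant g" and g: "g \<in> borel_measurable borel"
    and f: "in_L2 g f" and h: "in_L2 g h"
    and translate: "\<And>x. complex_of_real (g x) * h x = complex_of_real (g (x - a)) * f (x - a)"
  shows "L2_norm_sq g h = L2_norm_sq g f"
proof -
  have "f \<in> borel_measurable borel" using f by (simp add: in_L2_def)
  from inner_exp_translate[OF this g translate]
  have "cmod (inner_exp g h t) = cmod (inner_exp g f t)" for t by (simp add: norm_mult)
  then show ?thesis using assms(1) f h unfolding phase_invariant_def by metis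
qed

text \<open>On a set \<open>B\<close> where \<open>g \<le> n\<close> and \<open>g(\<cdot> + a) \<ge> 1/n\<close>, the ratio \<open>g\<^sup>2 / g(\<cdot> + a)\<close> is
  dominated by \<open>n\<^sup>2 g\<close>, hence integrable.\<close>

lemma bounded_ratio_integrable:
  fixes g :: "'a::euclidean_space \<Rightarrow> real"
  assumes [measurable]: "g \<in> borel_measurable borel" and g_nonneg: "\<And>x. g x \<ge> 0"
    and g_int: "integrable lborel g" and [measurable]: "B \<in> sets borel" and "n > 0"
    and bounds: "\<And>y. y \<in> B \<Longrightarrow> g y \<le> n \<and> 1 / n \<le> g (y + a)"
  shows "integrable lborel (\<lambda>y. indicator B y * ((g y)\<^sup>2 / g (y + a)))"
proof (rule Bochner_Integration.integrable_bound[OF integrable_mult_right[OF g_int, of "n * n"]])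
  show "AE y in lborel. norm (indicator B y * ((g y)\<^sup>2 / g (y + a))) \<le> norm (n * n * g y)"
  proof (rule AE_I2)
    fix y
    show "norm (indicator B y * ((g y)\<^sup>2 / g (y + a))) \<le> norm (n * n * g y)"
    proof (cases "y \<in> B")
      case True
      have "1 \<le> g (y + a) * n"
        using bounds[OF True] \<open>n > 0\<close> by (simp add: pos_divide_le_eq)
      then have pos: "g (y + a) > 0" using \<open>n > 0\<close> by (smt (verit) mult_nonpos_nonneg)
      have "(g y)\<^sup>2 \<le> n * g y"
        unfolding power2_eq_square by (rule mult_right_mono) (use bounds[OF True] g_nonneg in auto)
      also have "\<dots> \<le> n * g y * (g (y + a) * n)"
        using mult_left_mono[OF \<open>1 \<le> g (y + a) * n\<close>, of "n * g y"] g_nonneg[of y] \<open>n > 0\<close> by simp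
      finally have "(g y)\<^sup>2 / g (y + a) \<le> n * n * g y"
        using pos by (simp add: pos_divide_le_eq mult_ac)
      then show ?thesis using True pos g_nonneg[of y] \<open>n > 0\<close> by simp
    qed simp
  qed
qed measurable

text \<open>On such a set \<open>B\<close>, compare \<open>f = 1\<^sub>B\<close> with the function \<open>h\<close> whose
  product with \<open>g\<close> is the translate of \<open>1\<^sub>B g\<close>: both lie in \<open>L\<^sup>2(g dx)\<close>, and phase
  invariance gives \<open>\<integral>\<^sub>B g = \<parallel>f\<parallel>\<^sup>2 = \<parallel>h\<parallel>\<^sup>2 = \<integral>\<^sub>B g\<^sup>2 / g(\<cdot> + a)\<close>.\<close>

lemma phase_invariant_mass_balance:
  fixes g :: "'a::euclidean_space \<Rightarrow> real"
  assumes g_meas [measurable]: "g \<in> borel_measurable borel" and g_nonneg: "\<And>x. g x \<ge> 0"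
    and g_int: "integrable lborel g" and phase: "phase_invariant g"
    and B_sets [measurable]: "B \<in> sets borel" and "n > 0"
    and bounds: "\<And>y. y \<in> B \<Longrightarrow> g y \<le> n \<and> 1 / n \<le> g (y + a)"
  shows "(\<integral>y. indicator B y * g y \<partial>lborel) = (\<integral>y. indicator B y * ((g y)\<^sup>2 / g (y + a)) \<partial>lborel)"
proof -
  define k where "k y = indicator B y * ((g y)\<^sup>2 / g (y + a))" for y
  define f where "f x = complex_of_real (indicator B x)" for x
  define h where "h x = complex_of_real (indicator B (x - a) * g (x - a) / g x)" for x
  have pos: "g (y + a) > 0" if "y \<in> B" for y
    using bounds[OF that] \<open>n > 0\<close> by (smt (verit) divide_pos_pos)
  have k_int: "integrable lborel k"
    unfolding k_def by (rule bounded_ratio_integrable[OF g_meas g_nonneg g_int B_sets \<open>n > 0\<close> bounds])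
  have [measurable]: "k \<in> borel_measurable borel" unfolding k_def by measurable
  have f_norm: "g x * (cmod (f x))\<^sup>2 = indicator B x * g x" for x
    unfolding f_def by (simp add: indicator_def)
  have h_norm: "g x * (cmod (h x))\<^sup>2 = k (x - a)" for x
    using pos[of "x - a"] g_nonneg[of "x - a"]
    by (cases "x - a \<in> B") (auto simp: h_def k_def power2_eq_square norm_divide field_simps)
  have f_L2: "in_L2 g f"
    unfolding in_L2_def f_norm
  proof
    show "f \<in> borel_measurable borel" unfolding f_def by measurable
    show "integrable lborel (\<lambda>x. indicator B x * g x)"
      using integrable_real_mult_indicator[of B lborel g] B_sets g_int by (simp add: mult.commute)
  qed
  have h_L2: "in_L2 g h"
    unfolding in_L2_def h_norm
  proof
    show "h \<in> borel_measurable borel" unfolding h_def by measurable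
    show "integrable lborel (\<lambda>x. k (x - a))" using k_int by (simp add: integrable_translate)
  qed
  have translate: "complex_of_real (g x) * h x = complex_of_real (g (x - a)) * f (x - a)" for x
    using pos[of "x - a"] by (cases "x - a \<in> B") (auto simp: h_def f_def)
  have "(\<integral>y. indicator B y * g y \<partial>lborel) = L2_norm_sq g f"
    unfolding L2_norm_sq_def f_norm ..
  also have "\<dots> = L2_norm_sq g h"
    by (rule phase_invariant_translate[OF phase g_meas f_L2 h_L2 translate, symmetric])
  also have "\<dots> = integral\<^sup>L lborel k"
    unfolding L2_norm_sq_def h_norm by (simp add: integral_translate)
  finally show ?thesis unfolding k_def .
qed

lemma null_set_of_integral_eq:
  fixes \<phi> \<psi> :: "'a \<Rightarrow> real"
  assumes "integrable M (\<lambda>y. indicator B y * \<phi> y)" and "integrable M (\<lambda>y. indicator B y * \<psi> y)"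
    and "(\<integral>y. indicator B y * \<phi> y \<partial>M) = (\<integral>y. indicator B y * \<psi> y \<partial>M)"
    and less: "\<And>y. y \<in> B \<Longrightarrow> \<phi> y < \<psi> y"
  shows "AE y in M. y \<notin> B"
proof -
  define d where "d y = indicator B y * \<psi> y - indicator B y * \<phi> y" for y
  have d_nonneg: "d y \<ge> 0" for y
    using less[of y] by (cases "y \<in> B") (auto simp: d_def)
  have "integrable M d" and "integral\<^sup>L M d = 0"
    using assms(1-3) unfolding d_def by auto
  then have "AE y in M. d y = 0"
    using integral_nonneg_eq_0_iff_AE[of M d] d_nonneg by auto
  then show ?thesis
    by eventually_elim (use less in \<open>force simp: d_def\<close>)
qed

text \<open>Such a set splits
  into the parts where \<open>g < g(\<cdot> + a)\<close> and where \<open>g > g(\<cdot> + a)\<close>; on each part the mass balance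
  compares two integrands of which one is strictly smaller.\<close>

lemma phase_invariant_null_on_bounded:
  fixes g :: "'a::euclidean_space \<Rightarrow> real"
  assumes g_meas [measurable]: "g \<in> borel_measurable borel" and g_nonneg: "\<And>x. g x \<ge> 0"
    and g_int: "integrable lborel g" and phase: "phase_invariant g"
    and [measurable]: "B \<in> sets borel" and "n > 0"
    and bounds: "\<And>y. y \<in> B \<Longrightarrow> g y \<le> n \<and> 1 / n \<le> g (y + a)"
    and differ: "\<And>y. y \<in> B \<Longrightarrow> 0 < g y \<and> g y \<noteq> g (y + a)"
  shows "AE y in lborel. y \<notin> B"
proof -
  define Less where "Less = {y \<in> B. g y < g (y + a)}"
  define More where "More = {y \<in> B. g (y + a) < g y}"
  have Less_sets [measurable]: "Less \<in> sets borel" and More_sets [measurable]: "More \<in> sets borel"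
    unfolding Less_def More_def by measurable
  have g_on: "integrable lborel (\<lambda>y. indicator S y * g y)" if "S \<in> sets borel" for S
    using integrable_real_mult_indicator[of S lborel g] that g_int by (simp add: mult.commute)
  note ratio_int = bounded_ratio_integrable[OF g_meas g_nonneg g_int _ \<open>n > 0\<close>]
    and balance = phase_invariant_mass_balance[OF g_meas g_nonneg g_int phase _ \<open>n > 0\<close>]
  have Less_bounds: "g y \<le> n \<and> 1 / n \<le> g (y + a)" if "y \<in> Less" for y
    using bounds that by (simp add: Less_def)
  have More_bounds: "g y \<le> n \<and> 1 / n \<le> g (y + a)" if "y \<in> More" for y
    using bounds that by (simp add: More_def)
  note Less_int = ratio_int[OF Less_sets Less_bounds] and Less_balance = balance[OF Less_sets Less_bounds]
    and More_int = ratio_int[OF More_sets More_bounds] and More_balance = balance[OF More_sets More_bounds]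
  have "AE y in lborel. y \<notin> Less"
  proof (rule null_set_of_integral_eq[OF Less_int g_on[OF Less_sets] Less_balance[symmetric]])
    fix y assume "y \<in> Less"
    with differ[of y] show "(g y)\<^sup>2 / g (y + a) < g y"
      by (simp add: Less_def divide_less_eq power2_eq_square)
  qed
  moreover have "AE y in lborel. y \<notin> More"
  proof (rule null_set_of_integral_eq[OF g_on[OF More_sets] More_int More_balance])
    fix y assume "y \<in> More"
    moreover from this have "0 < g (y + a)"
      using bounds[of y] \<open>n > 0\<close> by (auto simp: More_def intro: less_le_trans[of 0 "1 / n"])
    ultimately show "g y < (g y)\<^sup>2 / g (y + a)"
      by (simp add: More_def less_divide_eq power2_eq_square)
  qed
  moreover have "B \<subseteq> Less \<union> More"
    using differ by (auto simp: Less_def More_def neq_iff)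
  ultimately show ?thesis by (auto elim: eventually_mono)
qed

text \<open>Hence a phase invariant density agrees almost everywhere with each of its translates
  wherever both are positive: the exceptional set is a countable union of sets to which the
  previous lemma applies.\<close>

lemma phase_invariant_translation_invariant:
  fixes g :: "'a::euclidean_space \<Rightarrow> real"
  assumes g_meas [measurable]: "g \<in> borel_measurable borel" and g_nonneg: "\<And>x. g x \<ge> 0"
    and g_int: "integrable lborel g" and phase: "phase_invariant g"
  shows "AE y in lborel. 0 < g y \<and> 0 < g (y + a) \<longrightarrow> g y = g (y + a)"
proof -
  define Bad where "Bad n = {y. g y \<le> real (Suc n) \<and> 1 / real (Suc n) \<le> g (y + a) \<and>
    0 < g y \<and> g y \<noteq> g (y + a)}" for n
  have "AE y in lborel. y \<notin> Bad n" for n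
    by (rule phase_invariant_null_on_bounded[OF g_meas g_nonneg g_int phase, of _ "real (Suc n)"])
      (auto simp: Bad_def)
  then have "AE y in lborel. \<forall>n. y \<notin> Bad n"
    by (simp add: AE_all_countable)
  then show ?thesis
  proof eventually_elim
    case (elim y)
    show ?case
    proof (intro impI, rule ccontr)
      assume pos: "0 < g y \<and> 0 < g (y + a)" and "g y \<noteq> g (y + a)"
      obtain n :: nat where n: "g y < real n" "1 / g (y + a) < real n"
        using reals_Archimedean2[of "max (g y) (1 / g (y + a))"] by auto
      have "1 < real n * g (y + a)" using n(2) pos by (simp add: pos_divide_less_eq)
      also have "\<dots> \<le> real (Suc n) * g (y + a)" using pos by (simp add: mult_right_mono)
      finally have "y \<in> Bad n"
        using n(1) pos \<open>g y \<noteq> g (y + a)\<close> by (simp add: Bad_def pos_divide_le_eq mult.commute)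
      with elim show False by blast
    qed
  qed
qed

text \<open>A measurable relation that holds almost everywhere along every translate
  \<open>y = x + a\<close> holds for almost every pair \<open>(x, y)\<close> (Tonelli and translation invariance).\<close>

lemma AE_AE_of_translates:
  fixes P :: "'a::euclidean_space \<Rightarrow> 'a \<Rightarrow> bool"
  assumes meas [measurable]: "Measurable.pred (lborel \<Otimes>\<^sub>M lborel) (\<lambda>(x, y). P x y)"
    and translates: "\<And>a. AE x in lborel. P x (x + a)"
  shows "AE x in lborel. AE y in lborel. P x y"
proof -
  define \<Psi> where "\<Psi> x y = (if P x y then 0 else 1 :: ennreal)" for x y
  have [measurable]: "(\<lambda>(x, y). \<Psi> x y) \<in> borel_measurable (lborel \<Otimes>\<^sub>M lborel)"
    unfolding \<Psi>_def by measurable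
  have "(\<lambda>(x, a). (x, x + a)) \<in> lborel \<Otimes>\<^sub>M lborel \<rightarrow>\<^sub>M lborel \<Otimes>\<^sub>M lborel"
    by measurable
  from measurable_compose[OF this meas]
  have [measurable]: "(\<lambda>(x, a). \<Psi> x (x + a)) \<in> borel_measurable (lborel \<Otimes>\<^sub>M lborel)"
    unfolding \<Psi>_def by (simp add: case_prod_beta')
  have "(\<integral>\<^sup>+ x. (\<integral>\<^sup>+ y. \<Psi> x y \<partial>lborel) \<partial>lborel) = (\<integral>\<^sup>+ x. (\<integral>\<^sup>+ a. \<Psi> x (x + a) \<partial>lborel) \<partial>lborel)"
    using nn_integral_translate[of "\<Psi> x" "- x" for x] by (simp add: add.commute)
  also have "\<dots> = (\<integral>\<^sup>+ a. (\<integral>\<^sup>+ x. \<Psi> x (x + a) \<partial>lborel) \<partial>lborel)"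
    by (rule lborel_pair.Fubini') measurable
  also have "\<dots> = 0"
  proof -
    have "(\<integral>\<^sup>+ x. \<Psi> x (x + a) \<partial>lborel) = 0" for a
      using translates[of a] by (subst nn_integral_cong_AE[where v = "\<lambda>_. 0"]) (auto simp: \<Psi>_def)
    then show ?thesis by simp
  qed
  finally have "AE x in lborel. (\<integral>\<^sup>+ y. \<Psi> x y \<partial>lborel) = 0"
    by (subst (asm) nn_integral_0_iff_AE) measurable
  then show ?thesis
  proof eventually_elim
    case (elim x)
    then have "AE y in lborel. \<Psi> x y = 0" by (simp add: nn_integral_0_iff_AE)
    then show ?case by eventually_elim (simp add: \<Psi>_def split: if_splits)
  qed
qed

lemma translation_invariant_imp_indicator:
  fixes g :: "'a::euclidean_space \<Rightarrow> real"
  assumes [measurable]: "g \<in> borel_measurable borel" and g_nonneg: "\<And>x. g x \<ge> 0"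
    and invariant: "\<And>a. AE y in lborel. 0 < g y \<and> 0 < g (y + a) \<longrightarrow> g y = g (y + a)"
  shows "\<exists>c E. E \<in> sets lborel \<and> (AE x in lborel. g x = c * indicator E x)"
proof (cases "AE x in lborel. g x = 0")
  case True
  then have "AE x in lborel. g x = 0 * indicator {} x" by simp
  then show ?thesis by blast
next
  case False
  have "Measurable.pred (lborel \<Otimes>\<^sub>M lborel) (\<lambda>(x, y). 0 < g x \<and> 0 < g y \<longrightarrow> g x = g y)"
    by measurable
  from AE_AE_of_translates[OF this invariant]
  have AE_AE: "AE x in lborel. AE y in lborel. 0 < g x \<and> 0 < g y \<longrightarrow> g x = g y" .
  obtain x0 where x0: "0 < g x0" "AE y in lborel. 0 < g y \<longrightarrow> g x0 = g y"
  proof -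
    have "\<exists>x0. 0 < g x0 \<and> (AE y in lborel. 0 < g y \<longrightarrow> g x0 = g y)"
    proof (rule ccontr)
      assume none: "\<nexists>x0. 0 < g x0 \<and> (AE y in lborel. 0 < g y \<longrightarrow> g x0 = g y)"
      from AE_AE have "AE x in lborel. g x = 0"
      proof eventually_elim
        case (elim x)
        show "g x = 0"
        proof (rule ccontr)
          assume "g x \<noteq> 0"
          with g_nonneg[of x] have "0 < g x" by simp
          with elim have "AE y in lborel. 0 < g y \<longrightarrow> g x = g y" by simp
          with none \<open>0 < g x\<close> show False by blast
        qed
      qed
      with False show False ..
    qed
    then show ?thesis using that by blast
  qed
  have "AE y in lborel. g y = g x0 * indicator {y. 0 < g y} y"
    using x0(2) by eventually_elim (use g_nonneg in \<open>auto simp: indicator_def order.order_iff_strict\<close>)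
  moreover have "{y. 0 < g y} \<in> sets lborel" by measurable
  ultimately show ?thesis by blast
qed

theorem phase_invariant_imp_indicator:
  fixes g :: "'a::euclidean_space \<Rightarrow> real"
  assumes "g \<in> borel_measurable borel" and "\<And>x. g x \<ge> 0" and "integrable lborel g"
    and "phase_invariant g"
  shows "\<exists>c E. E \<in> sets lborel \<and> (AE x in lborel. g x = c * indicator E x)"
  by (rule translation_invariant_imp_indicator[OF assms(1,2) phase_invariant_translation_invariant[OF assms]])

section \<open>The Hilbert space \<open>L\<^sup>2(g dx)\<close>\<close>

lemma square_of_sum_le: "(x + y)\<^sup>2 \<le> 2 * x\<^sup>2 + 2 * (y::real)\<^sup>2"
  using zero_le_power2[of "x - y"] unfolding power2_sum power2_diff by linarith

lemma cmod_add_sq: "(cmod (a + b))\<^sup>2 \<le> 2 * (cmod a)\<^sup>2 + 2 * (cmod b)\<^sup>2"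
  using power_mono[OF norm_triangle_ineq[of a b] norm_ge_zero, of 2] square_of_sum_le[of "cmod a" "cmod b"]
  by linarith

lemma cmod_mult_le: "cmod a * cmod b \<le> (cmod a)\<^sup>2 + (cmod b)\<^sup>2"
  using sum_squares_bound[of "cmod a" "cmod b"] mult_nonneg_nonneg[OF norm_ge_zero norm_ge_zero, of a b]
  by linarith

locale finite_density =
  fixes g :: "'a::euclidean_space \<Rightarrow> real"
  assumes g_meas [measurable]: "g \<in> borel_measurable borel"
    and g_nonneg: "\<And>x. g x \<ge> 0"
    and g_int: "integrable lborel g"
begin

definition L2_inner :: "('a \<Rightarrow> complex) \<Rightarrow> ('a \<Rightarrow> complex) \<Rightarrow> complex" where
  "L2_inner u v = (\<integral>x. complex_of_real (g x) * u x * cnj (v x) \<partial>lborel)"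

lemma inner_exp_eq: "inner_exp g f t = L2_inner f (exp_fun t)"
  unfolding inner_exp_def L2_inner_def ..

lemma nonneg_L2_norm_sq: "L2_norm_sq g u \<ge> 0"
  using L2_norm_sq_nonneg[of g, OF g_nonneg] .

lemma L2_add:
  assumes "in_L2 g u" "in_L2 g v"
  shows "in_L2 g (\<lambda>x. u x + v x)"
proof -
  have [measurable]: "u \<in> borel_measurable borel" "v \<in> borel_measurable borel"
    using assms by (auto simp: in_L2_def)
  have "integrable lborel (\<lambda>x. 2 * (g x * (cmod (u x))\<^sup>2) + 2 * (g x * (cmod (v x))\<^sup>2))"
    using assms unfolding in_L2_def by auto
  then have "integrable lborel (\<lambda>x. g x * (cmod (u x + v x))\<^sup>2)"
  proof (rule Bochner_Integration.integrable_bound)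
    show "AE x in lborel. norm (g x * (cmod (u x + v x))\<^sup>2)
        \<le> norm (2 * (g x * (cmod (u x))\<^sup>2) + 2 * (g x * (cmod (v x))\<^sup>2))"
    proof (rule AE_I2)
      fix x
      have "g x * (cmod (u x + v x))\<^sup>2 \<le> g x * (2 * (cmod (u x))\<^sup>2 + 2 * (cmod (v x))\<^sup>2)"
        using cmod_add_sq g_nonneg by (intro mult_left_mono) auto
      then show "norm (g x * (cmod (u x + v x))\<^sup>2)
          \<le> norm (2 * (g x * (cmod (u x))\<^sup>2) + 2 * (g x * (cmod (v x))\<^sup>2))"
        using g_nonneg[of x] by (simp add: algebra_simps)
    qed
  qed measurable
  then show ?thesis unfolding in_L2_def by simp
qed

lemma L2_scale:
  assumes "in_L2 g u"
  shows "in_L2 g (\<lambda>x. c * u x)"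
proof -
  have [measurable]: "u \<in> borel_measurable borel" using assms by (simp add: in_L2_def)
  have "integrable lborel (\<lambda>x. (cmod c)\<^sup>2 * (g x * (cmod (u x))\<^sup>2))"
    using assms unfolding in_L2_def by auto
  then show ?thesis
    unfolding in_L2_def by (simp add: norm_mult power_mult_distrib mult_ac)
qed

lemma L2_diff:
  assumes "in_L2 g u" "in_L2 g v"
  shows "in_L2 g (\<lambda>x. u x - v x)"
  using L2_add[OF assms(1) L2_scale[OF assms(2), of "-1"]] by simp

lemma L2_sum:
  assumes "\<And>l. l \<in> S \<Longrightarrow> in_L2 g (\<phi> l)"
  shows "in_L2 g (\<lambda>x. \<Sum>l\<in>S. a l * \<phi> l x)"
  using assms
proof (induction S rule: infinite_finite_induct)
  case (insert l S)
  then show ?case using L2_add[OF L2_scale[of "\<phi> l" "a l"]] by simp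
qed (simp_all add: in_L2_def)

lemma L2_exp: "in_L2 g (exp_fun t)"
  unfolding in_L2_def using g_int by simp

lemma L2_inner_integrable:
  assumes "in_L2 g u" "in_L2 g v"
  shows "integrable lborel (\<lambda>x. complex_of_real (g x) * u x * cnj (v x))"
proof -
  have [measurable]: "u \<in> borel_measurable borel" "v \<in> borel_measurable borel"
    using assms by (auto simp: in_L2_def)
  have "integrable lborel (\<lambda>x. g x * (cmod (u x))\<^sup>2 + g x * (cmod (v x))\<^sup>2)"
    using assms unfolding in_L2_def by auto
  then show ?thesis
  proof (rule Bochner_Integration.integrable_bound)
    show "AE x in lborel. norm (complex_of_real (g x) * u x * cnj (v x))
        \<le> norm (g x * (cmod (u x))\<^sup>2 + g x * (cmod (v x))\<^sup>2)"
    proof (rule AE_I2)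
      fix x
      have "g x * (cmod (u x) * cmod (v x)) \<le> g x * ((cmod (u x))\<^sup>2 + (cmod (v x))\<^sup>2)"
        using cmod_mult_le g_nonneg by (intro mult_left_mono) auto
      then show "norm (complex_of_real (g x) * u x * cnj (v x))
          \<le> norm (g x * (cmod (u x))\<^sup>2 + g x * (cmod (v x))\<^sup>2)"
        using g_nonneg[of x] by (simp add: norm_mult algebra_simps)
    qed
  qed measurable
qed

lemma L2_inner_add_left:
  assumes "in_L2 g u" "in_L2 g v" "in_L2 g w"
  shows "L2_inner (\<lambda>x. u x + v x) w = L2_inner u w + L2_inner v w"
  unfolding L2_inner_def
  using L2_inner_integrable[OF assms(1,3)] L2_inner_integrable[OF assms(2,3)]
  by (simp add: distrib_left distrib_right)

lemma L2_inner_scale_left: "L2_inner (\<lambda>x. c * u x) w = c * L2_inner u w"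
  unfolding L2_inner_def by (simp add: mult_ac)

lemma L2_inner_diff_left:
  assumes "in_L2 g u" "in_L2 g v" "in_L2 g w"
  shows "L2_inner (\<lambda>x. u x - v x) w = L2_inner u w - L2_inner v w"
  using L2_inner_add_left[OF assms(1) L2_scale[OF assms(2), of "-1"] assms(3)]
    L2_inner_scale_left[of "-1" v w]
  by simp

lemma L2_inner_cnj: "L2_inner v u = cnj (L2_inner u v)"
  unfolding L2_inner_def by (subst Bochner_Integration.integral_cnj[symmetric]) (simp add: mult_ac)

lemma L2_inner_diff_right:
  assumes "in_L2 g u" "in_L2 g v" "in_L2 g w"
  shows "L2_inner w (\<lambda>x. u x - v x) = L2_inner w u - L2_inner w v"
  using L2_inner_diff_left[OF assms] by (metis L2_inner_cnj complex_cnj_diff)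

lemma L2_inner_sum_left:
  assumes "\<And>l. l \<in> S \<Longrightarrow> in_L2 g (\<phi> l)" "in_L2 g w"
  shows "L2_inner (\<lambda>x. \<Sum>l\<in>S. a l * \<phi> l x) w = (\<Sum>l\<in>S. a l * L2_inner (\<phi> l) w)"
  using assms
proof (induction S rule: infinite_finite_induct)
  case (insert l S)
  have "L2_inner (\<lambda>x. \<Sum>l\<in>insert l S. a l * \<phi> l x) w
      = L2_inner (\<lambda>x. a l * \<phi> l x + (\<Sum>l\<in>S. a l * \<phi> l x)) w"
    using insert by simp
  also have "\<dots> = L2_inner (\<lambda>x. a l * \<phi> l x) w + L2_inner (\<lambda>x. \<Sum>l\<in>S. a l * \<phi> l x) w"
    using insert.prems by (intro L2_inner_add_left L2_scale L2_sum) auto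
  finally show ?case using insert by (simp add: L2_inner_scale_left)
qed (simp_all add: L2_inner_def)

lemma L2_inner_sum_right:
  assumes "\<And>l. l \<in> S \<Longrightarrow> in_L2 g (\<phi> l)" "in_L2 g w"
  shows "L2_inner w (\<lambda>x. \<Sum>l\<in>S. a l * \<phi> l x) = (\<Sum>l\<in>S. cnj (a l) * L2_inner w (\<phi> l))"
  using L2_inner_sum_left[OF assms, where a = a] by (simp add: L2_inner_cnj[of w])

lemma L2_norm_sq_inner: "complex_of_real (L2_norm_sq g u) = L2_inner u u"
proof -
  have "(\<lambda>x. complex_of_real (g x * (cmod (u x))\<^sup>2)) = (\<lambda>x. complex_of_real (g x) * u x * cnj (u x))"
    by (simp only: of_real_mult complex_norm_square mult.assoc)
  then show ?thesis
    unfolding L2_norm_sq_def L2_inner_def integral_complex_of_real[symmetric] by (rule arg_cong)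
qed

lemma L2_norm_sq_diff:
  assumes "in_L2 g u" "in_L2 g v"
  shows "L2_norm_sq g (\<lambda>x. u x - v x) = L2_norm_sq g u - 2 * Re (L2_inner u v) + L2_norm_sq g v"
proof -
  have "complex_of_real (L2_norm_sq g (\<lambda>x. u x - v x))
      = L2_inner u u - L2_inner v u - (L2_inner u v - L2_inner v v)"
    unfolding L2_norm_sq_inner
    by (simp add: L2_inner_diff_left[OF assms L2_diff[OF assms]] L2_inner_diff_right[OF assms] assms)
  also have "\<dots> = complex_of_real (L2_norm_sq g u) - (L2_inner u v + cnj (L2_inner u v))
      + complex_of_real (L2_norm_sq g v)"
    by (simp add: L2_norm_sq_inner L2_inner_cnj[of v u])
  also have "L2_inner u v + cnj (L2_inner u v) = complex_of_real (2 * Re (L2_inner u v))"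
    by (simp add: complex_add_cnj)
  finally have "complex_of_real (L2_norm_sq g (\<lambda>x. u x - v x)) = complex_of_real (L2_norm_sq g u)
      - complex_of_real (2 * Re (L2_inner u v)) + complex_of_real (L2_norm_sq g v)" .
  then show ?thesis
    by (simp only: of_real_diff[symmetric] of_real_add[symmetric] of_real_eq_iff)
qed

lemma L2_norm_sq_diff_cong:
  assumes "in_L2 g f" "in_L2 g u" "in_L2 g v" and null: "L2_norm_sq g (\<lambda>x. f x - u x) = 0"
  shows "L2_norm_sq g (\<lambda>x. f x - v x) = L2_norm_sq g (\<lambda>x. u x - v x)"
proof -
  have "integrable lborel (\<lambda>x. g x * (cmod (f x - u x))\<^sup>2)"
    using L2_diff[OF assms(1,2)] by (simp add: in_L2_def)
  then have "AE x in lborel. g x * (cmod (f x - u x))\<^sup>2 = 0"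
    using null g_nonneg unfolding L2_norm_sq_def by (subst (asm) integral_nonneg_eq_0_iff_AE) auto
  then have "AE x in lborel. g x * (cmod (f x - v x))\<^sup>2 = g x * (cmod (u x - v x))\<^sup>2"
    by eventually_elim auto
  then show ?thesis
    unfolding L2_norm_sq_def by (rule integral_cong_AE[rotated 2]) (use assms in \<open>auto simp: in_L2_def\<close>)
qed

end

section \<open>Orthonormal systems: Bessel's inequality\<close>

definition lincomb :: "('i \<Rightarrow> 'a \<Rightarrow> complex) \<Rightarrow> 'i set \<Rightarrow> ('i \<Rightarrow> complex) \<Rightarrow> 'a \<Rightarrow> complex" where
  "lincomb \<phi> S c = (\<lambda>x. \<Sum>l\<in>S. c l * \<phi> l x)"

lemma lincomb_diff:
  assumes "finite T" "S \<subseteq> T"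
  shows "(\<lambda>x. lincomb \<phi> T c x - lincomb \<phi> S c x) = lincomb \<phi> (T - S) c"
  unfolding lincomb_def using assms by (auto simp: sum_diff finite_subset)

context finite_density
begin

definition orthonormal :: "'i set \<Rightarrow> ('i \<Rightarrow> 'a \<Rightarrow> complex) \<Rightarrow> bool" where
  "orthonormal I \<phi> \<longleftrightarrow> (\<forall>l\<in>I. in_L2 g (\<phi> l)) \<and>
     (\<forall>l\<in>I. \<forall>m\<in>I. L2_inner (\<phi> l) (\<phi> m) = (if l = m then 1 else 0))"

lemma L2_lincomb: "orthonormal I \<phi> \<Longrightarrow> S \<subseteq> I \<Longrightarrow> in_L2 g (lincomb \<phi> S c)"
  unfolding lincomb_def orthonormal_def by (intro L2_sum) auto

lemma L2_inner_lincomb: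
  assumes ON: "orthonormal I \<phi>" and "finite S" "S \<subseteq> I" "m \<in> I"
  shows "L2_inner (lincomb \<phi> S c) (\<phi> m) = (if m \<in> S then c m else 0)"
proof -
  have "L2_inner (lincomb \<phi> S c) (\<phi> m) = (\<Sum>l\<in>S. c l * L2_inner (\<phi> l) (\<phi> m))"
    unfolding lincomb_def using assms by (intro L2_inner_sum_left) (auto simp: orthonormal_def)
  also have "\<dots> = (\<Sum>l\<in>S. if l = m then c l else 0)"
    using assms by (intro sum.cong) (auto simp: orthonormal_def)
  finally show ?thesis using \<open>finite S\<close> by (simp add: sum.delta')
qed

lemma L2_norm_sq_lincomb:
  assumes ON: "orthonormal I \<phi>" and "finite S" "S \<subseteq> I"
  shows "L2_norm_sq g (lincomb \<phi> S c) = (\<Sum>l\<in>S. (cmod (c l))\<^sup>2)"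
proof -
  have "complex_of_real (L2_norm_sq g (lincomb \<phi> S c)) = L2_inner (lincomb \<phi> S c) (lincomb \<phi> S c)"
    by (rule L2_norm_sq_inner)
  also have "\<dots> = (\<Sum>m\<in>S. cnj (c m) * L2_inner (lincomb \<phi> S c) (\<phi> m))"
    by (subst (2) lincomb_def, rule L2_inner_sum_right)
      (use assms L2_lincomb[OF ON] in \<open>auto simp: orthonormal_def\<close>)
  also have "\<dots> = (\<Sum>m\<in>S. complex_of_real ((cmod (c m))\<^sup>2))"
  proof (rule sum.cong)
    fix m assume "m \<in> S"
    then have "L2_inner (lincomb \<phi> S c) (\<phi> m) = c m"
      using L2_inner_lincomb[OF assms] \<open>S \<subseteq> I\<close> by auto
    then show "cnj (c m) * L2_inner (lincomb \<phi> S c) (\<phi> m) = complex_of_real ((cmod (c m))\<^sup>2)"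
      by (simp only: complex_norm_square mult.commute)
  qed simp
  finally show ?thesis by (simp only: of_real_sum[symmetric] of_real_eq_iff)
qed

lemma bessel_identity:
  assumes ON: "orthonormal I \<phi>" and "finite S" "S \<subseteq> I" and f: "in_L2 g f"
  defines "c \<equiv> \<lambda>l. L2_inner f (\<phi> l)"
  shows "L2_norm_sq g (\<lambda>x. f x - lincomb \<phi> S c x) = L2_norm_sq g f - (\<Sum>l\<in>S. (cmod (c l))\<^sup>2)"
proof -
  have "L2_inner f (lincomb \<phi> S c) = (\<Sum>l\<in>S. cnj (c l) * L2_inner f (\<phi> l))"
    unfolding lincomb_def using assms by (intro L2_inner_sum_right) (auto simp: orthonormal_def)
  also have "\<dots> = (\<Sum>l\<in>S. complex_of_real ((cmod (c l))\<^sup>2))"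
    unfolding c_def by (simp only: complex_norm_square mult.commute)
  finally have "Re (L2_inner f (lincomb \<phi> S c)) = (\<Sum>l\<in>S. (cmod (c l))\<^sup>2)"
    by (simp only: of_real_sum[symmetric] Re_complex_of_real)
  then show ?thesis
    using L2_norm_sq_diff[OF f L2_lincomb[OF ON \<open>S \<subseteq> I\<close>]] L2_norm_sq_lincomb[OF assms(1-3)]
    by simp
qed

lemma bessel_inequality:
  assumes "orthonormal I \<phi>" "finite S" "S \<subseteq> I" "in_L2 g f"
  shows "(\<Sum>l\<in>S. (cmod (L2_inner f (\<phi> l)))\<^sup>2) \<le> L2_norm_sq g f"
  using bessel_identity[OF assms] nonneg_L2_norm_sq by (metis diff_ge_0_iff_ge)

section \<open>Completeness of \<open>L\<^sup>2(g dx)\<close>\<close>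

text \<open>Since \<open>g\<close> is integrable, \<open>L\<^sup>2(g dx)\<close> embeds into \<open>L\<^sup>1(g dx)\<close>; quantitatively,
  \<open>\<integral> g |v| \<le> \<epsilon> (\<integral> g + 1) / 2\<close> whenever \<open>\<integral> g |v|\<^sup>2 \<le> \<epsilon>\<^sup>2\<close> (from \<open>t \<le> \<epsilon>/2 + t\<^sup>2/(2\<epsilon>)\<close>).\<close>

lemma L1_integrable:
  assumes "in_L2 g v"
  shows "integrable lborel (\<lambda>x. complex_of_real (g x) * v x)"
  using L2_inner_integrable[OF assms, of "\<lambda>_. 1"] g_int by (simp add: in_L2_def)

lemma L1_bound:
  assumes v: "in_L2 g v" and "e > 0" and small: "L2_norm_sq g v \<le> e\<^sup>2"
  shows "(\<integral>x. g x * cmod (v x) \<partial>lborel) \<le> e * (integral\<^sup>L lborel g + 1) / 2"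
proof -
  have v2: "integrable lborel (\<lambda>x. g x * (cmod (v x))\<^sup>2)" using v by (simp add: in_L2_def)
  have v1: "integrable lborel (\<lambda>x. g x * cmod (v x))"
    using integrable_norm[OF L1_integrable[OF v]] g_nonneg by (simp add: norm_mult)
  have am_gm: "t \<le> e / 2 + t\<^sup>2 / (2 * e)" for t
  proof -
    have "2 * e * t \<le> t\<^sup>2 + e\<^sup>2"
      using zero_le_power2[of "t - e"] unfolding power2_diff by (simp add: algebra_simps)
    then show ?thesis using \<open>e > 0\<close> by (simp add: field_simps power2_eq_square)
  qed
  have "(\<integral>x. g x * cmod (v x) \<partial>lborel) \<le> (\<integral>x. e / 2 * g x + g x * (cmod (v x))\<^sup>2 / (2 * e) \<partial>lborel)"
  proof (rule integral_mono[OF v1])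
    show "integrable lborel (\<lambda>x. e / 2 * g x + g x * (cmod (v x))\<^sup>2 / (2 * e))"
      using g_int v2 by auto
    fix x
    have "g x * cmod (v x) \<le> g x * (e / 2 + (cmod (v x))\<^sup>2 / (2 * e))"
      using am_gm g_nonneg by (intro mult_left_mono) auto
    then show "g x * cmod (v x) \<le> e / 2 * g x + g x * (cmod (v x))\<^sup>2 / (2 * e)"
      by (simp add: algebra_simps)
  qed
  also have "\<dots> = e / 2 * integral\<^sup>L lborel g + L2_norm_sq g v / (2 * e)"
    unfolding L2_norm_sq_def using g_int v2 by simp
  also have "\<dots> \<le> e / 2 * integral\<^sup>L lborel g + e / 2"
    using \<open>e > 0\<close> small by (simp add: divide_le_eq power2_eq_square)
  finally show ?thesis by (simp add: field_simps)
qed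

text \<open>Only points where \<open>g > 0\<close>
  matter.\<close>

lemma L2_fatou:
  assumes W: "\<And>j. in_L2 g (W j)" and [measurable]: "w \<in> borel_measurable borel"
    and lim: "AE x in lborel. 0 < g x \<longrightarrow> (\<lambda>j. W j x) \<longlonglongrightarrow> w x"
    and bound: "eventually (\<lambda>j. L2_norm_sq g (W j) \<le> c) sequentially"
  shows "in_L2 g w" and "L2_norm_sq g w \<le> c"
proof -
  have [measurable]: "W j \<in> borel_measurable borel" for j using W by (simp add: in_L2_def)
  have W_nn: "(\<integral>\<^sup>+x. ennreal (g x * (cmod (W j x))\<^sup>2) \<partial>lborel) = ennreal (L2_norm_sq g (W j))" for j
    using W[of j] g_nonneg unfolding in_L2_def L2_norm_sq_def by (subst nn_integral_eq_integral) auto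
  have "(\<integral>\<^sup>+x. ennreal (g x * (cmod (w x))\<^sup>2) \<partial>lborel)
      = (\<integral>\<^sup>+x. liminf (\<lambda>j. ennreal (g x * (cmod (W j x))\<^sup>2)) \<partial>lborel)"
  proof (rule nn_integral_cong_AE)
    show "AE x in lborel. ennreal (g x * (cmod (w x))\<^sup>2) = liminf (\<lambda>j. ennreal (g x * (cmod (W j x))\<^sup>2))"
      using lim
    proof eventually_elim
      case (elim x)
      show ?case
      proof (cases "0 < g x")
        case True
        then have "(\<lambda>j. ennreal (g x * (cmod (W j x))\<^sup>2)) \<longlonglongrightarrow> ennreal (g x * (cmod (w x))\<^sup>2)"
          using elim by (intro tendsto_ennrealI tendsto_intros) auto
        then show ?thesis by (simp add: lim_imp_Liminf)
      next
        case False
        then show ?thesis using g_nonneg[of x] by (simp add: Liminf_const)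
      qed
    qed
  qed
  also have "\<dots> \<le> liminf (\<lambda>j. \<integral>\<^sup>+x. ennreal (g x * (cmod (W j x))\<^sup>2) \<partial>lborel)"
    by (rule nn_integral_liminf) measurable
  also have "\<dots> \<le> ennreal c"
    unfolding W_nn using bound by (intro Liminf_le) (auto elim: eventually_mono intro: ennreal_leI)
  finally have bounded: "(\<integral>\<^sup>+x. ennreal (g x * (cmod (w x))\<^sup>2) \<partial>lborel) \<le> ennreal c" .
  have "integrable lborel (\<lambda>x. g x * (cmod (w x))\<^sup>2)"
  proof (rule integrableI_bounded)
    show "(\<integral>\<^sup>+x. ennreal (norm (g x * (cmod (w x))\<^sup>2)) \<partial>lborel) < \<infinity>"
      using bounded g_nonneg by (simp add: abs_mult le_less_trans)
  qed measurable
  then show "in_L2 g w" by (simp add: in_L2_def)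
  have "0 \<le> c"
    using bound nonneg_L2_norm_sq by (auto simp: eventually_sequentially intro: order_trans)
  have "ennreal (L2_norm_sq g w) = (\<integral>\<^sup>+x. ennreal (g x * (cmod (w x))\<^sup>2) \<partial>lborel)"
    unfolding L2_norm_sq_def using \<open>integrable lborel _\<close> g_nonneg
    by (subst nn_integral_eq_integral) auto
  with bounded \<open>0 \<le> c\<close> show "L2_norm_sq g w \<le> c" by (metis ennreal_le_iff)
qed

text \<open>A Cauchy sequence in \<open>L\<^sup>2(g dx)\<close> is Cauchy in \<open>L\<^sup>1(g dx)\<close>, so a subsequence converges
  almost everywhere on the set where \<open>g > 0\<close>.\<close>

lemma L2_cauchy_AE_subseq:
  fixes U :: "nat \<Rightarrow> 'a \<Rightarrow> complex"
  assumes U: "\<And>n. in_L2 g (U n)"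
    and cauchy: "\<And>e. 0 < e \<Longrightarrow> \<exists>N. \<forall>j\<ge>N. \<forall>k\<ge>N. L2_norm_sq g (\<lambda>x. U j x - U k x) < e"
  obtains r u where "strict_mono r" and "u \<in> borel_measurable borel"
    and "AE x in lborel. 0 < g x \<longrightarrow> (\<lambda>i. U (r i) x) \<longlonglongrightarrow> u x"
proof -
  define G where "G = integral\<^sup>L lborel g"
  have "G \<ge> 0" unfolding G_def using g_nonneg by (simp add: integral_nonneg_AE)
  define M where "M = density lborel (\<lambda>x. ennreal (g x))"
  have [measurable]: "U n \<in> borel_measurable borel" for n using U by (simp add: in_L2_def)
  have U_M: "integrable M (U n)" for n
    using L1_integrable[OF U] g_nonneg unfolding M_def
    by (subst integrable_density) (auto simp: scaleR_conv_of_real)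
  have "\<exists>N. \<forall>i\<ge>N. \<forall>j\<ge>N. (LINT x|M. norm (U i x - U j x)) < e" if "e > 0" for e
  proof -
    define \<delta> where "\<delta> = e / (G + 1)"
    have "\<delta> > 0" using \<open>e > 0\<close> \<open>G \<ge> 0\<close> by (simp add: \<delta>_def)
    obtain N where N: "\<And>i j. i \<ge> N \<Longrightarrow> j \<ge> N \<Longrightarrow> L2_norm_sq g (\<lambda>x. U i x - U j x) < \<delta>\<^sup>2"
      using cauchy[of "\<delta>\<^sup>2"] \<open>\<delta> > 0\<close> by auto
    have "(LINT x|M. norm (U i x - U j x)) < e" if "i \<ge> N" "j \<ge> N" for i j
    proof -
      have "(LINT x|M. norm (U i x - U j x)) = (\<integral>x. g x * cmod (U i x - U j x) \<partial>lborel)"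
        unfolding M_def using g_nonneg by (subst integral_density) auto
      also have "\<dots> \<le> \<delta> * (G + 1) / 2"
        unfolding G_def using N[OF that] \<open>\<delta> > 0\<close> by (intro L1_bound L2_diff U) auto
      also have "\<dots> < e" using \<open>e > 0\<close> \<open>G \<ge> 0\<close> by (simp add: \<delta>_def)
      finally show ?thesis .
    qed
    then show ?thesis by blast
  qed
  from cauchy_L1_AE_cauchy_subseq[OF U_M this]
  obtain r where r: "strict_mono r" and "AE x in M. Cauchy (\<lambda>i. U (r i) x)" by metis
  then have "AE x in lborel. 0 < g x \<longrightarrow> Cauchy (\<lambda>i. U (r i) x)"
    unfolding M_def by (subst (asm) AE_density) auto
  then have "AE x in lborel. 0 < g x \<longrightarrow> (\<lambda>i. U (r i) x) \<longlonglongrightarrow> lim (\<lambda>i. U (r i) x)"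
    by eventually_elim (auto simp: Cauchy_convergent_iff convergent_LIMSEQ_iff)
  moreover have "(\<lambda>x. lim (\<lambda>i. U (r i) x)) \<in> borel_measurable borel" by measurable
  ultimately show ?thesis using that r by blast
qed

text \<open>Riesz--Fischer: every Cauchy sequence in \<open>L\<^sup>2(g dx)\<close> converges.  Fatou's lemma identifies
  the almost everywhere limit of a subsequence as the \<open>L\<^sup>2\<close> limit.\<close>

lemma L2_complete:
  fixes U :: "nat \<Rightarrow> 'a \<Rightarrow> complex"
  assumes U: "\<And>n. in_L2 g (U n)"
    and cauchy: "\<And>e. 0 < e \<Longrightarrow> \<exists>N. \<forall>j\<ge>N. \<forall>k\<ge>N. L2_norm_sq g (\<lambda>x. U j x - U k x) < e"
  obtains u where "in_L2 g u" and "(\<lambda>n. L2_norm_sq g (\<lambda>x. u x - U n x)) \<longlonglongrightarrow> 0"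
proof -
  obtain r u where r: "strict_mono r" and [measurable]: "u \<in> borel_measurable borel"
    and conv: "AE x in lborel. 0 < g x \<longrightarrow> (\<lambda>i. U (r i) x) \<longlonglongrightarrow> u x"
    using L2_cauchy_AE_subseq[OF U cauchy] by metis
  have [measurable]: "U n \<in> borel_measurable borel" for n using U by (simp add: in_L2_def)
  have close: "in_L2 g (\<lambda>x. u x - U n x) \<and> L2_norm_sq g (\<lambda>x. u x - U n x) \<le> e"
    if "\<forall>j\<ge>N. \<forall>k\<ge>N. L2_norm_sq g (\<lambda>x. U j x - U k x) < e" "n \<ge> N" for N n e
  proof -
    have "eventually (\<lambda>j. L2_norm_sq g (\<lambda>x. U (r j) x - U n x) \<le> e) sequentially"
    proof (rule eventually_sequentiallyI)
      fix j assume "N \<le> j"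
      then have "N \<le> r j" using seq_suble[OF r, of j] by linarith
      then show "L2_norm_sq g (\<lambda>x. U (r j) x - U n x) \<le> e"
        using that by (simp add: less_imp_le)
    qed
    moreover have "AE x in lborel. 0 < g x \<longrightarrow> (\<lambda>j. U (r j) x - U n x) \<longlonglongrightarrow> u x - U n x"
      using conv by eventually_elim (auto intro: tendsto_diff)
    ultimately show ?thesis
      using L2_fatou[of "\<lambda>j x. U (r j) x - U n x" "\<lambda>x. u x - U n x" e] U by (auto intro: L2_diff)
  qed
  obtain N where "\<forall>j\<ge>N. \<forall>k\<ge>N. L2_norm_sq g (\<lambda>x. U j x - U k x) < 1" using cauchy[of 1] by auto
  then have "in_L2 g (\<lambda>x. u x - U N x)" using close[OF _ order.refl] by blast
  from L2_add[OF this U[of N]] have "in_L2 g u" by simp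
  moreover have "(\<lambda>n. L2_norm_sq g (\<lambda>x. u x - U n x)) \<longlonglongrightarrow> 0"
  proof (rule LIMSEQ_I)
    fix e :: real assume "e > 0"
    then obtain N where N: "\<forall>j\<ge>N. \<forall>k\<ge>N. L2_norm_sq g (\<lambda>x. U j x - U k x) < e / 2"
      using cauchy[of "e / 2"] by auto
    show "\<exists>N. \<forall>n\<ge>N. norm (L2_norm_sq g (\<lambda>x. u x - U n x) - 0) < e"
    proof (intro exI allI impI)
      fix n assume "N \<le> n"
      then have "L2_norm_sq g (\<lambda>x. u x - U n x) \<le> e / 2" using close[OF N] by blast
      then show "norm (L2_norm_sq g (\<lambda>x. u x - U n x) - 0) < e"
        using nonneg_L2_norm_sq \<open>e > 0\<close> by simp
    qed
  qed
  ultimately show ?thesis using that by blast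
qed

end

section \<open>Parseval's identity for complete orthonormal systems\<close>

lemma has_sum_nonneg_exhaustion:
  fixes f :: "'i \<Rightarrow> real"
  assumes sum: "(f has_sum s) A" and nonneg: "\<And>x. x \<in> A \<Longrightarrow> 0 \<le> f x"
  obtains S where "\<And>n. finite (S n)" "\<And>n. S n \<subseteq> A" "incseq S" "(\<lambda>n. sum f (S n)) \<longlonglongrightarrow> s"
proof -
  have "\<exists>T. finite T \<and> T \<subseteq> A \<and> dist (sum f T) s \<le> inverse (real (Suc n))" for n
    by (rule has_sum_finite_approximation[OF sum]) simp
  then obtain T where T: "\<And>n. finite (T n) \<and> T n \<subseteq> A \<and> dist (sum f (T n)) s \<le> inverse (real (Suc n))"
    by metis
  define S where "S n = (\<Union>i\<le>n. T i)" for n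
  have S: "finite (S n)" "S n \<subseteq> A" for n
    using T unfolding S_def by auto
  have "incseq S"
    unfolding S_def by (intro monoI UN_mono) auto
  have "s - inverse (real (Suc n)) \<le> sum f (S n)" for n
  proof -
    have "T n \<subseteq> S n" by (auto simp: S_def)
    then have "sum f (T n) \<le> sum f (S n)"
      using S(2)[of n] nonneg by (intro sum_mono2[OF S(1)]) blast+
    then show ?thesis using T[of n] by (simp add: dist_real_def abs_le_iff)
  qed
  moreover have "sum f (S n) \<le> s" for n
    using finite_sum_le_has_sum[OF sum S] nonneg by blast
  ultimately have "(\<lambda>n. sum f (S n)) \<longlonglongrightarrow> s"
    by (intro tendsto_sandwich[OF _ _ LIMSEQ_inverse_real_of_nat_add_minus tendsto_const]) auto
  with S \<open>incseq S\<close> that show ?thesis by blast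
qed

lemma has_sum_exhaustion_outside:
  fixes f :: "'i \<Rightarrow> real"
  assumes sum: "(f has_sum s) A" and nonneg: "\<And>x. x \<in> A \<Longrightarrow> 0 \<le> f x"
    and S: "\<And>n. finite (S n)" "\<And>n. S n \<subseteq> A" and lim: "(\<lambda>n. sum f (S n)) \<longlonglongrightarrow> s"
    and "x \<in> A" and never: "\<forall>n. x \<notin> S n"
  shows "f x = 0"
proof -
  have "f x \<le> s - sum f (S n)" for n
  proof -
    have "f x + sum f (S n) = sum f (insert x (S n))" using never S(1) by simp
    also have "\<dots> \<le> s"
      using S \<open>x \<in> A\<close> nonneg by (intro finite_sum_le_has_sum[OF sum]) auto
    finally show ?thesis by simp
  qed
  then have "f x \<le> s - s"
    by (intro tendsto_lowerbound[OF tendsto_diff[OF tendsto_const lim]] always_eventually) auto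
  with nonneg[OF \<open>x \<in> A\<close>] show ?thesis by simp
qed

context finite_density
begin

text \<open>Coefficients with respect to a unit vector depend continuously on the function, since
  \<open>|\<langle>v, \<phi>\<^sub>l\<rangle>|\<^sup>2 \<le> \<parallel>v\<parallel>\<^sup>2\<close> is Bessel's inequality for the single element \<open>\<phi>\<^sub>l\<close>.\<close>

lemma L2_inner_limit:
  assumes ON: "orthonormal I \<phi>" "l \<in> I" and u: "in_L2 g u" and U: "\<And>n. in_L2 g (U n)"
    and lim: "(\<lambda>n. L2_norm_sq g (\<lambda>x. u x - U n x)) \<longlonglongrightarrow> 0"
  shows "(\<lambda>n. L2_inner (U n) (\<phi> l)) \<longlonglongrightarrow> L2_inner u (\<phi> l)"
proof -
  have "(cmod (L2_inner (U n) (\<phi> l) - L2_inner u (\<phi> l)))\<^sup>2 \<le> L2_norm_sq g (\<lambda>x. u x - U n x)" for n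
  proof -
    have "L2_inner u (\<phi> l) - L2_inner (U n) (\<phi> l) = L2_inner (\<lambda>x. u x - U n x) (\<phi> l)"
      using ON u U by (simp add: L2_inner_diff_left orthonormal_def)
    moreover have "(cmod (L2_inner (\<lambda>x. u x - U n x) (\<phi> l)))\<^sup>2 \<le> L2_norm_sq g (\<lambda>x. u x - U n x)"
      using bessel_inequality[OF ON(1), of "{l}"] ON(2) u U by (simp add: L2_diff)
    ultimately show ?thesis by (simp add: norm_minus_commute)
  qed
  then have "(\<lambda>n. (cmod (L2_inner (U n) (\<phi> l) - L2_inner u (\<phi> l)))\<^sup>2) \<longlonglongrightarrow> 0"
    by (intro tendsto_sandwich[OF _ _ tendsto_const lim]) auto
  from tendsto_real_sqrt[OF this]
  have "(\<lambda>n. cmod (L2_inner (U n) (\<phi> l) - L2_inner u (\<phi> l))) \<longlonglongrightarrow> 0" by simp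
  then show ?thesis by (simp add: tendsto_norm_zero_iff LIM_zero_iff)
qed

lemma lincomb_cauchy:
  assumes ON: "orthonormal I \<phi>"
    and S: "\<And>n. finite (S n)" "\<And>n. S n \<subseteq> I" "incseq S"
    and conv: "convergent (\<lambda>n. \<Sum>l\<in>S n. (cmod (c l))\<^sup>2)" and "e > 0"
  shows "\<exists>N. \<forall>j\<ge>N. \<forall>k\<ge>N. L2_norm_sq g (\<lambda>x. lincomb \<phi> (S j) c x - lincomb \<phi> (S k) c x) < e"
proof -
  define q where "q l = (cmod (c l))\<^sup>2" for l
  have dist: "L2_norm_sq g (\<lambda>x. lincomb \<phi> (S j) c x - lincomb \<phi> (S k) c x) = \<bar>sum q (S j) - sum q (S k)\<bar>"
    if "k \<le> j" for j k
  proof -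
    have "S k \<subseteq> S j" using \<open>incseq S\<close> that by (simp add: incseq_def)
    have "L2_norm_sq g (lincomb \<phi> (S j - S k) c) = sum q (S j - S k)"
      unfolding q_def by (rule L2_norm_sq_lincomb[OF ON]) (use S(1)[of j] S(2)[of j] in auto)
    also have "\<dots> = \<bar>sum q (S j) - sum q (S k)\<bar>"
      using \<open>S k \<subseteq> S j\<close> S(1) sum_mono2[OF S(1) \<open>S k \<subseteq> S j\<close>, of q]
      by (simp add: sum_diff q_def)
    finally show ?thesis by (simp only: lincomb_diff[OF S(1) \<open>S k \<subseteq> S j\<close>])
  qed
  obtain N where N: "\<And>j k. j \<ge> N \<Longrightarrow> k \<ge> N \<Longrightarrow> \<bar>sum q (S j) - sum q (S k)\<bar> < e"
    using CauchyD[OF convergent_Cauchy[OF conv] \<open>e > 0\<close>] by (auto simp: q_def)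
  have "L2_norm_sq g (\<lambda>x. lincomb \<phi> (S j) c x - lincomb \<phi> (S k) c x) < e" if "j \<ge> N" "k \<ge> N" for j k
  proof (cases "k \<le> j")
    case True
    then show ?thesis using dist N that by simp
  next
    case False
    then have "L2_norm_sq g (\<lambda>x. lincomb \<phi> (S k) c x - lincomb \<phi> (S j) c x) < e"
      using dist N that by simp
    then show ?thesis unfolding L2_norm_sq_def by (simp add: norm_minus_commute)
  qed
  then show ?thesis by blast
qed

lemma lincomb_limit_coefficients:
  assumes ON: "orthonormal I \<phi>"
    and S: "\<And>n. finite (S n)" "\<And>n. S n \<subseteq> I" "incseq S"
    and outside: "\<And>l. l \<in> I \<Longrightarrow> (\<forall>n. l \<notin> S n) \<Longrightarrow> c l = 0"
    and u: "in_L2 g u" and lim: "(\<lambda>n. L2_norm_sq g (\<lambda>x. u x - lincomb \<phi> (S n) c x)) \<longlonglongrightarrow> 0"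
    and "l \<in> I"
  shows "L2_inner u (\<phi> l) = c l"
proof -
  have coeff: "L2_inner (lincomb \<phi> (S n) c) (\<phi> l) = (if l \<in> S n then c l else 0)" for n
    using L2_inner_lincomb[OF ON S(1,2) \<open>l \<in> I\<close>] .
  have "(\<lambda>n. L2_inner (lincomb \<phi> (S n) c) (\<phi> l)) \<longlonglongrightarrow> L2_inner u (\<phi> l)"
    by (rule L2_inner_limit[OF ON \<open>l \<in> I\<close> u L2_lincomb[OF ON S(2)] lim])
  moreover have "(\<lambda>n. L2_inner (lincomb \<phi> (S n) c) (\<phi> l)) \<longlonglongrightarrow> c l"
  proof (cases "\<exists>n. l \<in> S n")
    case True
    then obtain n0 where "l \<in> S n0" by blast
    then have "\<forall>\<^sub>F n in sequentially. L2_inner (lincomb \<phi> (S n) c) (\<phi> l) = c l"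
      using \<open>incseq S\<close> by (auto simp: eventually_sequentially coeff incseq_def intro!: exI[of _ n0])
    then show ?thesis by (rule tendsto_eventually)
  next
    case False
    then show ?thesis using outside[OF \<open>l \<in> I\<close>] by (simp add: coeff)
  qed
  ultimately show ?thesis by (rule LIMSEQ_unique)
qed

text \<open>Bessel's inequality makes the coefficient energies summable; the partial expansions
  along an exhausting sequence of finite sets converge to some \<open>u\<close> with the same coefficients
  as \<open>f\<close>, so \<open>f = u\<close> by completeness of the system, and Bessel's identity gives the claim.\<close>

theorem parseval:
  assumes ON: "orthonormal I \<phi>"
    and complete: "\<And>f. in_L2 g f \<Longrightarrow> (\<forall>l\<in>I. L2_inner f (\<phi> l) = 0) \<Longrightarrow> L2_norm_sq g f = 0"
    and f: "in_L2 g f"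
  shows "((\<lambda>l. (cmod (L2_inner f (\<phi> l)))\<^sup>2) has_sum L2_norm_sq g f) I"
proof -
  define c where "c l = L2_inner f (\<phi> l)" for l
  define q where "q l = (cmod (c l))\<^sup>2" for l
  have "bdd_above (sum q ` {F. F \<subseteq> I \<and> finite F})"
    using bessel_inequality[OF ON _ _ f] by (auto simp: q_def c_def intro!: bdd_aboveI)
  from nonneg_bdd_above_has_sum[OF _ this] obtain \<sigma> where sum: "(q has_sum \<sigma>) I"
    by (auto simp: q_def)
  obtain S where S: "\<And>n. finite (S n)" "\<And>n. S n \<subseteq> I" "incseq S"
    and S_lim: "(\<lambda>n. sum q (S n)) \<longlonglongrightarrow> \<sigma>"
    using has_sum_nonneg_exhaustion[OF sum] by (auto simp: q_def)
  have outside: "c l = 0" if "l \<in> I" "\<forall>n. l \<notin> S n" for l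
    using has_sum_exhaustion_outside[OF sum _ S(1,2) S_lim that] by (simp add: q_def)
  define U where "U n = lincomb \<phi> (S n) c" for n
  have U: "in_L2 g (U n)" for n unfolding U_def using L2_lincomb[OF ON S(2)] .
  have "convergent (\<lambda>n. \<Sum>l\<in>S n. (cmod (c l))\<^sup>2)"
    using S_lim by (auto simp: convergent_def q_def)
  from L2_complete[OF U lincomb_cauchy[OF ON S this, folded U_def]]
  obtain u where u: "in_L2 g u" and U_lim: "(\<lambda>n. L2_norm_sq g (\<lambda>x. u x - U n x)) \<longlonglongrightarrow> 0" .
  have "L2_inner u (\<phi> l) = c l" if "l \<in> I" for l
    using lincomb_limit_coefficients[OF ON S outside u U_lim[unfolded U_def] that] .
  then have "L2_norm_sq g (\<lambda>x. f x - u x) = 0"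
    using complete[OF L2_diff[OF f u]] ON f u
    by (simp add: L2_inner_diff_left orthonormal_def c_def)
  then have "L2_norm_sq g f - sum q (S n) = L2_norm_sq g (\<lambda>x. u x - U n x)" for n
    using bessel_identity[OF ON S(1,2) f] L2_norm_sq_diff_cong[OF f u U]
    by (simp add: U_def q_def c_def[abs_def])
  with U_lim have "(\<lambda>n. L2_norm_sq g f - sum q (S n)) \<longlonglongrightarrow> 0" by simp
  from tendsto_diff[OF tendsto_const[of "L2_norm_sq g f"] this]
  have "(\<lambda>n. sum q (S n)) \<longlonglongrightarrow> L2_norm_sq g f" by simp
  with S_lim have "\<sigma> = L2_norm_sq g f" by (rule LIMSEQ_unique)
  with sum show ?thesis by (simp add: q_def[abs_def] c_def)
qed

end

context finite_density
begin

lemma exp_ONB_tight_weighted_exp_frame: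
  assumes "exp_ONB g \<Lambda>"
  shows "tight_weighted_exp_frame g \<Lambda> (\<lambda>_. 1)"
proof -
  have ON: "orthonormal \<Lambda> exp_fun"
    using assms L2_exp unfolding exp_ONB_def orthonormal_def inner_exp_eq by blast
  have "\<And>f. in_L2 g f \<Longrightarrow> (\<forall>l\<in>\<Lambda>. L2_inner f (exp_fun l) = 0) \<Longrightarrow> L2_norm_sq g f = 0"
    using assms unfolding exp_ONB_def inner_exp_eq by blast
  from parseval[OF ON this] show ?thesis
    unfolding tight_weighted_exp_frame_def inner_exp_eq by (intro exI[of _ 1]) simp
qed

end

theorem corollary2p6:
  fixes g :: "'a::euclidean_space \<Rightarrow> real"
  assumes g_meas: "g \<in> borel_measurable borel"
    and g_nonneg: "\<And>x. g x \<ge> 0"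
    and g_finite: "integrable lborel g"
  shows "((\<exists>\<nu>. tight_frame_measure g \<nu>) \<longrightarrow>
            (\<exists>c E. E \<in> sets lborel \<and> (AE x in lborel. g x = c * indicator E x)))
       \<and> (\<not> (\<exists>c E. E \<in> sets lborel \<and> (AE x in lborel. g x = c * indicator E x)) \<longrightarrow>
            (\<forall>\<Lambda> w. \<not> tight_weighted_exp_frame g \<Lambda> w) \<and> (\<forall>\<Lambda>. \<not> exp_ONB g \<Lambda>))"
proof -
  interpret finite_density g using assms by unfold_locales
  let ?indicator = "\<exists>c E. E \<in> sets lborel \<and> (AE x in lborel. g x = c * indicator E x)"
  have indicator: ?indicator if "phase_invariant g"
    using phase_invariant_imp_indicator[OF assms that] .
  have measure_case: ?indicator if "tight_frame_measure g \<nu>" for \<nu>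
    using indicator tight_frame_measure_phase_invariant[OF g_nonneg that] by blast
  have frame_case: ?indicator if "tight_weighted_exp_frame g \<Lambda> w" for \<Lambda> w
    using indicator tight_weighted_exp_frame_phase_invariant[OF that] by blast
  have basis_case: ?indicator if "exp_ONB g \<Lambda>" for \<Lambda>
    using frame_case exp_ONB_tight_weighted_exp_frame[OF that] by blast
  show ?thesis using measure_case frame_case basis_case by blast
qed

end
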